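(* Let $S=\{(x_1,x_2)\in\mathbb{R}^2:x_2^3-x_1^2\ge0\}$, so that $\overline{\mathrm{conv}(S)}=\{x_2\ge0\}$; let $\tilde S^{o}=\{(x_0,x_1,x_2):x_2^3-x_0x_1^2\ge0,\ x_0>0\}$ and $\tilde G=\{X_0,\ X_2^3-X_0X_1^2,\ X_0^2+X_1^2+X_2^2-1,\ 1-X_0^2-X_1^2-X_2^2\}$. Then $(0,\pm1,0)\in\overline{\tilde S^{o}}$, so $\mathrm{conv}(\overline{\tilde S^{o}})$ is not pointed, and $\widetilde{\mathrm{TH}}_k(\tilde G)=\mathbb{R}^2$ for every $k\ge1$; hence $\bigcap_k\widetilde{\mathrm{TH}}_k(\tilde G)\neq\overline{\mathrm{conv}(S)}$.
   Context: For a finite set $H$ of polynomials, $\mathcal{Q}_k(H)=\{\sum_{j}\sigma_jh_j:h_0=1,\ \sigma_j\text{ sums of squares},\ \deg(\sigma_jh_j)\le2k\}$. $\widetilde{\mathrm{TH}}_k(\tilde G)=\{(x_1,x_2):\tilde l(1,x_1,x_2)\ge0\ \forall\tilde l\in\mathcal{Q}_k(\tilde G)\text{ that is a linear form in }(X_0,X_1,X_2)\text{ or }0\}$. A closed convex cone $K$ is pointed if $K\cap(-K)=\{0\}$. *)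

theory Defs
  imports "HOL-Analysis.Analysis"
begin

text \<open>A real polynomial in X0,X1,X2 is represented by its polynomial function
 (faithful over the infinite field R); degree bounds are expressed by
 representability with monomials of total degree at most d.\<close>

definition monomials3 :: "nat \<Rightarrow> (nat \<times> nat \<times> nat) set" where
  "monomials3 d = {(a,b,c). a + b + c \<le> d}"

definition poly3_deg_le :: "nat \<Rightarrow> (real \<times> real \<times> real \<Rightarrow> real) \<Rightarrow> bool" where
  "poly3_deg_le d f \<longleftrightarrow> (\<exists>coef :: nat \<times> nat \<times> nat \<Rightarrow> real.
     f = (\<lambda>(x0,x1,x2). \<Sum>(a,b,c)\<in>monomials3 d. coef (a,b,c) * x0^a * x1^b * x2^c))"

definition poly3 :: "(real \<times> real \<times> real \<Rightarrow> real) \<Rightarrow> bool" where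
  "poly3 f \<longleftrightarrow> (\<exists>d. poly3_deg_le d f)"

definition sos3 :: "(real \<times> real \<times> real \<Rightarrow> real) \<Rightarrow> bool" where
  "sos3 \<sigma> \<longleftrightarrow> (\<exists>Q. finite Q \<and> (\<forall>q\<in>Q. poly3 q) \<and> \<sigma> = (\<lambda>x. \<Sum>q\<in>Q. (q x)^2))"

definition quadmod :: "nat \<Rightarrow> (real \<times> real \<times> real \<Rightarrow> real) set \<Rightarrow> (real \<times> real \<times> real \<Rightarrow> real) set" where
  "quadmod k H = {p. \<exists>\<sigma>. (\<forall>h\<in>insert (\<lambda>_. 1) H. sos3 (\<sigma> h) \<and> poly3_deg_le (2*k) (\<lambda>x. \<sigma> h x * h x))
      \<and> p = (\<lambda>x. \<Sum>h\<in>insert (\<lambda>_. 1) H. \<sigma> h x * h x)}"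

definition linform3 :: "(real \<times> real \<times> real \<Rightarrow> real) \<Rightarrow> bool" where
  "linform3 l \<longleftrightarrow> (\<exists>a b c. l = (\<lambda>(x0,x1,x2). a*x0 + b*x1 + c*x2))"

definition THt :: "nat \<Rightarrow> (real \<times> real \<times> real \<Rightarrow> real) set \<Rightarrow> (real \<times> real) set" where
  "THt k H = {(x1,x2). \<forall>l\<in>quadmod k H. linform3 l \<longrightarrow> l (1,x1,x2) \<ge> 0}"

definition pointed :: "'a::real_vector set \<Rightarrow> bool" where
  "pointed K \<longleftrightarrow> K \<inter> uminus ` K = {0}"

end

theory Submission
  imports Defs
begin

text \<open>Every element of the quadratic module is nonnegative where all generators are, so a linear
 form \<open>a X\<^sub>0 + b X\<^sub>1 + c X\<^sub>2\<close> in \<open>Q\<^sub>k(G)\<close> is nonnegative at \<open>(1,0,0)\<close>, \<open>(0,\<plusminus>1,0)\<close>, \<open>(0,0,1)\<close>,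
 giving \<open>a \<ge> 0\<close>, \<open>b = 0\<close>, \<open>c \<ge> 0\<close>. Along the curve \<open>(0, \<surd>(1-s\<^sup>2), s)\<close>, \<open>s < 0\<close>, every generator
 is at least \<open>s\<^sup>3\<close>, so \<open>c s \<ge> w(s) s\<^sup>3\<close> for the continuous SOS weight \<open>w(s) = \<Sum>\<sigma>\<^sub>j\<close>; letting
 \<open>s \<rightarrow> 0\<^sup>-\<close> forces \<open>c \<le> 0\<close>. Hence every such form is \<open>a X\<^sub>0\<close>, which is nonnegative at \<open>(1,x\<^sub>1,x\<^sub>2)\<close>.\<close>

lemma poly3_continuous: "poly3 f \<Longrightarrow> continuous_on UNIV f"
  unfolding poly3_def poly3_deg_le_def
  by (auto simp: case_prod_beta intro!: continuous_intros)

lemma sos3_continuous: "sos3 f \<Longrightarrow> continuous_on UNIV f"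
  unfolding sos3_def
  by (auto intro!: continuous_intros poly3_continuous[THEN continuous_on_subset])

lemma sos3_nonneg: "sos3 f \<Longrightarrow> 0 \<le> f x"
  unfolding sos3_def by (auto intro!: sum_nonneg)

lemma quadmod_weighted_lower_bound:
  assumes "p \<in> quadmod k H"
  obtains w where "continuous_on UNIV w"
    "\<And>x t. t \<le> 1 \<Longrightarrow> (\<And>h. h \<in> H \<Longrightarrow> t \<le> h x) \<Longrightarrow> w x * t \<le> p x"
proof -
  let ?H = "insert (\<lambda>_. 1) H"
  obtain \<sigma> where sos: "\<And>h. h \<in> ?H \<Longrightarrow> sos3 (\<sigma> h)"
    and p: "p = (\<lambda>x. \<Sum>h\<in>?H. \<sigma> h x * h x)"
    using assms unfolding quadmod_def by blast
  define w where "w x = (\<Sum>h\<in>?H. \<sigma> h x)" for x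
  have "continuous_on UNIV w"
    unfolding w_def by (intro continuous_on_sum) (use sos sos3_continuous in blast)
  moreover have "w x * t \<le> p x" if "t \<le> 1" "\<And>h. h \<in> H \<Longrightarrow> t \<le> h x" for x t
  proof -
    have "w x * t = (\<Sum>h\<in>?H. \<sigma> h x * t)"
      unfolding w_def by (simp add: sum_distrib_right)
    also have "\<dots> \<le> (\<Sum>h\<in>?H. \<sigma> h x * h x)"
      using that by (intro sum_mono mult_left_mono sos3_nonneg sos) auto
    finally show ?thesis unfolding p .
  qed
  ultimately show thesis by (rule that)
qed

lemma quadmod_nonneg:
  assumes "p \<in> quadmod k H" "\<And>h. h \<in> H \<Longrightarrow> 0 \<le> h x"
  shows "0 \<le> p x"
proof (rule quadmod_weighted_lower_bound[OF assms(1)])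
  fix w assume w: "\<And>x t. t \<le> 1 \<Longrightarrow> (\<And>h. h \<in> H \<Longrightarrow> t \<le> h x) \<Longrightarrow> w x * t \<le> p x"
  have "w x * 0 \<le> p x" by (rule w) (simp_all add: assms(2))
  then show ?thesis by simp
qed

lemma nonpos_of_cubic_lower_bound:
  fixes F :: "real \<Rightarrow> real"
  assumes "isCont F 0" and "eventually (\<lambda>s. F s * s^3 \<le> c * s) (at_left 0)"
  shows "c \<le> 0"
proof (rule tendsto_lowerbound)
  have "((\<lambda>s. F s * s^2) \<longlongrightarrow> F 0 * 0^2) (at 0)"
    using assms(1) by (intro tendsto_intros) (simp add: isCont_def)
  then show "((\<lambda>s. F s * s^2) \<longlongrightarrow> 0) (at_left 0)"
    by (auto intro: tendsto_mono at_le)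
  have "eventually (\<lambda>s. s < 0) (at_left (0::real))"
    by (simp add: eventually_at_filter)
  with assms(2) show "eventually (\<lambda>s. c \<le> F s * s^2) (at_left 0)"
  proof eventually_elim
    case (elim s)
    then have "(F s * s^2) * s \<le> c * s"
      by (simp add: power2_eq_square power3_eq_cube algebra_simps)
    with \<open>s < 0\<close> show ?case by (simp add: mult_le_cancel_right)
  qed
qed simp

definition cusp_gens :: "(real \<times> real \<times> real \<Rightarrow> real) set" where
  "cusp_gens = {(\<lambda>(x0,x1,x2). x0), (\<lambda>(x0,x1,x2). x2^3 - x0*x1^2),
     (\<lambda>(x0,x1,x2). x0^2 + x1^2 + x2^2 - 1), (\<lambda>(x0,x1,x2). 1 - x0^2 - x1^2 - x2^2)}"

lemma nonneg_on_cusp_gens: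
  assumes "0 \<le> x0" "x0 * x1^2 \<le> x2^3" "x0^2 + x1^2 + x2^2 = 1"
  shows "\<forall>h\<in>cusp_gens. 0 \<le> h (x0, x1, x2)"
  using assms unfolding cusp_gens_def by auto

lemma cusp_gens_ge_cube_on_circle:
  assumes "-1 < s" "s < 0" "h \<in> cusp_gens"
  shows "s^3 \<le> h (0, sqrt (1 - s^2), s)"
proof -
  have "s^2 \<le> 1" using assms(1,2) by (simp add: abs_square_le_1)
  then have "(sqrt (1 - s^2))^2 = 1 - s^2" by simp
  moreover have "s^3 \<le> 0" using assms(2) by (simp add: power_le_zero_eq)
  ultimately show ?thesis using assms(3) unfolding cusp_gens_def by auto
qed

lemma linform3_in_quadmod_cusp_gens:
  assumes "l \<in> quadmod k cusp_gens" "linform3 l"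
  obtains a where "0 \<le> a" "l = (\<lambda>(x0,x1,x2). a * x0)"
proof -
  obtain a b c where l: "l = (\<lambda>(x0,x1,x2). a*x0 + b*x1 + c*x2)"
    using assms(2) unfolding linform3_def by blast
  have nonneg: "0 \<le> l (x0, x1, x2)"
    if "0 \<le> x0" "x0 * x1^2 \<le> x2^3" "x0^2 + x1^2 + x2^2 = 1" for x0 x1 x2
    using quadmod_nonneg[OF assms(1)] nonneg_on_cusp_gens[OF that] by blast
  have "0 \<le> a" using nonneg[of 1 0 0] unfolding l by simp
  moreover have "b = 0" using nonneg[of 0 1 0] nonneg[of 0 "-1" 0] unfolding l by simp
  moreover have "c = 0"
  proof (rule antisym)
    obtain w where w: "continuous_on UNIV w"
      "\<And>x t. t \<le> 1 \<Longrightarrow> (\<And>h. h \<in> cusp_gens \<Longrightarrow> t \<le> h x) \<Longrightarrow> w x * t \<le> l x"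
      by (fact quadmod_weighted_lower_bound[OF assms(1)])
    define \<gamma> where "\<gamma> s = (0::real, sqrt (1 - s^2), s)" for s :: real
    have "isCont (w \<circ> \<gamma>) 0"
      unfolding \<gamma>_def using w(1)
      by (intro continuous_intros) (auto simp: continuous_on_eq_continuous_at)
    moreover have "eventually (\<lambda>s. (w \<circ> \<gamma>) s * s^3 \<le> c * s) (at_left 0)"
      using eventually_at_left_real[of "-1" "0::real"]
    proof (rule eventually_mono)
      fix s :: real assume "s \<in> {-1<..<0}"
      then have "s^3 \<le> 1" by (auto simp: power_le_zero_eq intro: order_trans[of _ 0])
      with \<open>s \<in> {-1<..<0}\<close> have "w (\<gamma> s) * s^3 \<le> l (\<gamma> s)"
        unfolding \<gamma>_def by (auto intro: w(2) cusp_gens_ge_cube_on_circle)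
      then show "(w \<circ> \<gamma>) s * s^3 \<le> c * s"
        unfolding l \<gamma>_def using \<open>b = 0\<close> by simp
    qed simp
    ultimately show "c \<le> 0" by (rule nonpos_of_cubic_lower_bound)
    show "0 \<le> c" using nonneg[of 0 0 1] unfolding l by simp
  qed
  ultimately show thesis using that l by auto
qed

lemma THt_cusp_gens: "THt k cusp_gens = UNIV"
  unfolding THt_def by (auto elim: linform3_in_quadmod_cusp_gens)

lemma convex_hull_cusp_upper_half:
  assumes "0 < x2"
  shows "(x1, x2) \<in> convex hull {(x1,x2). x2^3 - x1^2 \<ge> (0::real)}"
    (is "_ \<in> convex hull ?S")
proof -
  define \<mu> where "\<mu> = 2 + x1^2 / x2^3"
  have x23: "0 < x2^3" using assms by simp
  then have "2 \<le> \<mu>" unfolding \<mu>_def by simp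
  \<comment> \<open>\<open>(x\<^sub>1,x\<^sub>2)\<close> lies on the segment from the cusp point \<open>(0,0)\<close> to \<open>\<mu>(x\<^sub>1,x\<^sub>2)\<close>\<close>
  have "(\<mu>*x2)^3 - (\<mu>*x1)^2 = \<mu>^2 * (\<mu> * x2^3 - x1^2)"
    by (simp add: power2_eq_square power3_eq_cube algebra_simps)
  also have "\<mu> * x2^3 - x1^2 = 2 * x2^3"
    unfolding \<mu>_def using x23 by (simp add: algebra_simps)
  finally have "0 \<le> (\<mu>*x2)^3 - (\<mu>*x1)^2"
    using x23 by simp
  then have "(\<mu>*x1, \<mu>*x2) \<in> convex hull ?S"
    by (intro hull_inc) simp
  moreover have "(0,0) \<in> convex hull ?S" by (intro hull_inc) simp
  ultimately have "(1/\<mu>) *\<^sub>R (\<mu>*x1, \<mu>*x2) + (1 - 1/\<mu>) *\<^sub>R (0,0) \<in> convex hull ?S"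
    using \<open>2 \<le> \<mu>\<close> by (intro convexD convex_convex_hull) auto
  then show ?thesis using \<open>2 \<le> \<mu>\<close> by simp
qed

lemma closure_convex_hull_cusp:
  "closure (convex hull {(x1,x2). x2^3 - x1^2 \<ge> (0::real)}) = {(x1,x2). x2 \<ge> 0}"
    (is "closure (convex hull ?S) = ?H")
proof
  have "?H = {p. 0 \<le> snd p}" by auto
  then have "closed ?H" "convex ?H"
    by (auto simp: convex_def intro!: closed_Collect_le continuous_intros)
  moreover have "?S \<subseteq> ?H"
  proof clarify
    fix x1 x2 :: real assume "0 \<le> x2^3 - x1^2"
    then have "0 \<le> x2^3" by (meson diff_ge_0_iff_ge order_trans zero_le_power2)
    then show "0 \<le> x2" by (simp add: zero_le_power_eq)
  qed
  ultimately show "closure (convex hull ?S) \<subseteq> ?H"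
    by (intro closure_minimal hull_minimal)
  show "?H \<subseteq> closure (convex hull ?S)"
  proof clarify
    fix x1 x2 :: real assume "0 \<le> x2"
    let ?q = "\<lambda>n. (x1, x2 + inverse (real (Suc n)))"
    have "\<forall>n. ?q n \<in> convex hull ?S"
      by (intro allI convex_hull_cusp_upper_half add_nonneg_pos \<open>0 \<le> x2\<close>) simp
    moreover have "?q \<longlonglongrightarrow> (x1, x2 + 0)"
      by (intro tendsto_intros LIMSEQ_inverse_real_of_nat)
    ultimately show "(x1, x2) \<in> closure (convex hull ?S)"
      unfolding closure_sequential by auto
  qed
qed

lemma axis_point_in_closure_homogenized_cusp:
  fixes y :: real
  assumes "y^2 = 1"
  shows "(0, y, 0) \<in> closure {(x0,x1,x2). x2^3 - x0*x1^2 \<ge> 0 \<and> x0 > (0::real)}"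
proof -
  let ?q = "\<lambda>n. ((inverse (real (Suc n)))^3, y, inverse (real (Suc n)))"
  have "?q \<longlonglongrightarrow> (0^3, y, 0)"
    by (intro tendsto_intros LIMSEQ_inverse_real_of_nat)
  then show ?thesis
    using assms unfolding closure_sequential by (intro exI[of _ ?q]) simp
qed

lemma not_pointed_if_opposite:
  assumes "v \<in> K" "- v \<in> K" "v \<noteq> 0"
  shows "\<not> pointed K"
proof
  assume "pointed K"
  moreover have "v \<in> uminus ` K" using assms(2) by (metis image_eqI minus_minus)
  ultimately show False using assms(1,3) unfolding pointed_def by blast
qed

theorem mainTheorem19:
  fixes S :: "(real \<times> real) set" and So :: "(real \<times> real \<times> real) set"
    and G :: "(real \<times> real \<times> real \<Rightarrow> real) set"
  defines "S \<equiv> {(x1,x2). x2^3 - x1^2 \<ge> 0}"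
    and "So \<equiv> {(x0,x1,x2). x2^3 - x0*x1^2 \<ge> 0 \<and> x0 > 0}"
    and "G \<equiv> {(\<lambda>(x0,x1,x2). x0), (\<lambda>(x0,x1,x2). x2^3 - x0*x1^2),
              (\<lambda>(x0,x1,x2). x0^2 + x1^2 + x2^2 - 1), (\<lambda>(x0,x1,x2). 1 - x0^2 - x1^2 - x2^2)}"
  shows "closure (convex hull S) = {(x1,x2). x2 \<ge> 0}
    \<and> (0,1,0) \<in> closure So \<and> (0,-1,0) \<in> closure So
    \<and> \<not> pointed (convex hull (closure So))
    \<and> (\<forall>k\<ge>1. THt k G = UNIV)
    \<and> (\<Inter>k\<in>{1..}. THt k G) \<noteq> closure (convex hull S)"
proof -
  have hull: "closure (convex hull S) = {(x1,x2). x2 \<ge> 0}"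
    unfolding S_def by (rule closure_convex_hull_cusp)
  have axis: "(0,1,0) \<in> closure So" "(0,-1,0) \<in> closure So"
    unfolding So_def by (rule axis_point_in_closure_homogenized_cusp; simp)+
  have "(0,1,0) \<in> convex hull (closure So)" using axis(1) by (rule hull_inc)
  moreover have "- (0,1,0) \<in> convex hull (closure So)" using axis(2) by (simp add: hull_inc)
  ultimately have pointed: "\<not> pointed (convex hull (closure So))"
    by (rule not_pointed_if_opposite) (simp add: zero_prod_def)
  have TH: "THt k G = UNIV" for k
    unfolding G_def cusp_gens_def[symmetric] by (rule THt_cusp_gens)
  have "(0,-1) \<in> (\<Inter>k\<in>{1..}. THt k G)" by (simp add: TH)
  moreover have "(0,-1) \<notin> closure (convex hull S)" unfolding hull by simp
  ultimately have "(\<Inter>k\<in>{1..}. THt k G) \<noteq> closure (convex hull S)" by blast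
  with hull axis pointed TH show ?thesis by (intro conjI allI impI)
qed

end
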